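(* Let $X$ have a pdf $f$ satisfying Conditions (A) and (B) below. Suppose the uniform quantizer $Q_{\mathrm{uni}}^\delta$ and the integer-valued Shannon code are used. Then the zero-wait sampler is asymptotically optimal: $$\lim_{\delta\to0}\Big[\mathrm{AoI}(S_{\mathrm z},Q_{\mathrm{uni}}^\delta,L')-\inf_S\mathrm{AoI}(S,Q_{\mathrm{uni}}^\delta,L')\Big]=0,$$ where the infimum is over all stationary deterministic sampling policies $S$.
   Context: Let $X$ be a real random variable with pdf $f$. Condition (A): $f$ is continuous and differentiable, and its support is a bounded interval $I$. Condition (B): $\int_I f\log_2^2 f\,dx$ and $-\int_I f\log_2 f\,dx$ exist and are finite. Quantizer and code. The uniform quantizer $Q_{\mathrm{uni}}^\delta$ partitions $I$ into consecutive cells of length $\delta$. Let $p_i$ be the probability of cell $i$. The integer-valued Shannon code assigns length $\lceil -\log_2 p_i\rceil$ to cell $i$, and $L'$ denotes the resulting random codeword length. Sampling policies. A stationary deterministic sampling policy $S$ is a measurable function $z:[0,\infty)\to[0,W]$, for some fixed $W$, with waiting time $Z=z(L')$. The zero-wait policy $S_{\mathrm z}$ has $z\equiv0$. Objective. The AoI is $\mathrm{AoI}(S,Q,L')=\frac{E[(L'+Z)^2]}{2E[L'+Z]}+E[L']$. *)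

theory Defs
  imports "HOL-Analysis.Analysis"
begin

definition num_cells :: "real \<Rightarrow> real \<Rightarrow> real \<Rightarrow> nat" where
  "num_cells a b \<delta> = nat \<lceil>(b - a) / \<delta>\<rceil>"

definition uni_cell :: "real \<Rightarrow> real \<Rightarrow> real \<Rightarrow> nat \<Rightarrow> real set" where
  "uni_cell a b \<delta> i = {a + real i * \<delta> ..< a + (real i + 1) * \<delta>} \<inter> {a..b}"

definition cell_prob :: "(real \<Rightarrow> real) \<Rightarrow> real \<Rightarrow> real \<Rightarrow> real \<Rightarrow> nat \<Rightarrow> real" where
  "cell_prob f a b \<delta> i = (LINT x : uni_cell a b \<delta> i | lborel. f x)"

definition shannon_len :: "(real \<Rightarrow> real) \<Rightarrow> real \<Rightarrow> real \<Rightarrow> real \<Rightarrow> nat \<Rightarrow> real" where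
  "shannon_len f a b \<delta> i = real_of_int \<lceil>- log 2 (cell_prob f a b \<delta> i)\<rceil>"

text \<open>Expectation of g(L') where L' takes value shannon_len i with probability cell_prob i.\<close>
definition exp_L :: "(real \<Rightarrow> real) \<Rightarrow> real \<Rightarrow> real \<Rightarrow> real \<Rightarrow> (real \<Rightarrow> real) \<Rightarrow> real" where
  "exp_L f a b \<delta> g = (\<Sum>i<num_cells a b \<delta>. cell_prob f a b \<delta> i * g (shannon_len f a b \<delta> i))"

text \<open>AoI(S, Q, L') = E[(L'+Z)^2] / (2 E[L'+Z]) + E[L'] with Z = z(L').\<close>
definition AoI :: "(real \<Rightarrow> real) \<Rightarrow> real \<Rightarrow> real \<Rightarrow> real \<Rightarrow> (real \<Rightarrow> real) \<Rightarrow> real" where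
  "AoI f a b \<delta> z =
     exp_L f a b \<delta> (\<lambda>l. (l + z l)\<^sup>2) / (2 * exp_L f a b \<delta> (\<lambda>l. l + z l))
     + exp_L f a b \<delta> (\<lambda>l. l)"

definition policies :: "real \<Rightarrow> (real \<Rightarrow> real) set" where
  "policies W = {z. z \<in> borel_measurable borel \<and> (\<forall>t\<ge>0. 0 \<le> z t \<and> z t \<le> W)}"

end

theory Submission
  imports Defs "HOL-Real_Asymp.Real_Asymp"
begin

text \<open>
  A density that is continuous on its compact support is bounded, say by M, so every cell of
  width \<delta> has probability at most \<delta> M and every Shannon codeword is at least
  -log2(\<delta> M) bits long; hence E[L'] tends to infinity. The variance of L' stays bounded,
  because p (\<lceil>-log2 p\<rceil> - log2 (1/\<delta>))^2 is controlled by \<delta> u (log2 u)^2 at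
  u = p/\<delta> \<le> M, a bounded function of u. For any waiting policy, Jensen gives
  E[(L'+Z)^2] / (2 E[L'+Z]) \<ge> E[L'+Z]/2 \<ge> E[L']/2, while zero waiting achieves
  E[L'^2] / (2 E[L']) = E[L']/2 + Var L' / (2 E[L']). So the gap is at most
  Var L' / (2 E[L']) = O(1 / log (1/\<delta>)).
\<close>

lemma sum_weighted_sq_dev:
  fixes p x :: "'i \<Rightarrow> real"
  assumes "sum p S = 1"
  shows "(\<Sum>i\<in>S. p i * (x i - t)^2) = (\<Sum>i\<in>S. p i * (x i)^2) - 2 * t * (\<Sum>i\<in>S. p i * x i) + t^2"
proof -
  have "(\<Sum>i\<in>S. p i * (x i - t)^2) = (\<Sum>i\<in>S. p i * (x i)^2 - 2 * t * (p i * x i) + t^2 * p i)"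
    by (rule sum.cong) (auto simp: power2_eq_square algebra_simps)
  also have "\<dots> = (\<Sum>i\<in>S. p i * (x i)^2) - 2 * t * (\<Sum>i\<in>S. p i * x i) + t^2 * sum p S"
    by (simp add: sum.distrib sum_subtractf sum_distrib_left)
  finally show ?thesis using assms by simp
qed

lemma weighted_mean_sq_le:
  fixes p x :: "'i \<Rightarrow> real"
  assumes "sum p S = 1" "\<forall>i\<in>S. 0 \<le> p i"
  shows "(\<Sum>i\<in>S. p i * x i)^2 \<le> (\<Sum>i\<in>S. p i * (x i)^2)"
proof -
  let ?m = "\<Sum>i\<in>S. p i * x i"
  have "0 \<le> (\<Sum>i\<in>S. p i * (x i - ?m)^2)" using assms(2) by (intro sum_nonneg) auto
  also have "\<dots> = (\<Sum>i\<in>S. p i * (x i)^2) - ?m^2"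
    using sum_weighted_sq_dev[OF assms(1)] by (simp add: power2_eq_square)
  finally show ?thesis by simp
qed

lemma weighted_variance_le_sq_dev:
  fixes p x :: "'i \<Rightarrow> real"
  assumes "sum p S = 1"
  shows "(\<Sum>i\<in>S. p i * (x i)^2) - (\<Sum>i\<in>S. p i * x i)^2 \<le> (\<Sum>i\<in>S. p i * (x i - t)^2)"
proof -
  have "0 \<le> ((\<Sum>i\<in>S. p i * x i) - t)^2" by simp
  then show ?thesis
    using sum_weighted_sq_dev[OF assms, of x t] by (simp add: power2_eq_square algebra_simps)
qed

lemma half_weighted_mean_le:
  fixes p x y :: "'i \<Rightarrow> real"
  assumes "sum p S = 1" "\<forall>i\<in>S. 0 \<le> p i" "\<forall>i\<in>S. x i \<le> y i" "0 < (\<Sum>i\<in>S. p i * x i)"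
  shows "(\<Sum>i\<in>S. p i * x i) / 2 \<le> (\<Sum>i\<in>S. p i * (y i)^2) / (2 * (\<Sum>i\<in>S. p i * y i))"
proof -
  let ?X = "\<Sum>i\<in>S. p i * x i" and ?Y = "\<Sum>i\<in>S. p i * y i"
  have "?X \<le> ?Y" using assms(2,3) by (intro sum_mono mult_left_mono) auto
  then have "0 < ?Y" using assms(4) by linarith
  have "?Y / 2 = ?Y^2 / (2 * ?Y)"
    using \<open>0 < ?Y\<close> by (simp add: power2_eq_square)
  also have "\<dots> \<le> (\<Sum>i\<in>S. p i * (y i)^2) / (2 * ?Y)"
    using weighted_mean_sq_le[OF assms(1,2)] \<open>0 < ?Y\<close> by (intro divide_right_mono) auto
  finally show ?thesis using \<open>?X \<le> ?Y\<close> by linarith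
qed

lemma diff_cINF_bounds:
  fixes g :: "'a \<Rightarrow> real"
  assumes "x \<in> A" "\<forall>z\<in>A. g x - v \<le> g z"
  shows "0 \<le> g x - (INF z\<in>A. g z) \<and> g x - (INF z\<in>A. g z) \<le> v"
proof -
  have "bdd_below (g ` A)" using assms(2) by (intro bdd_belowI2[of _ "g x - v"]) auto
  then have "(INF z\<in>A. g z) \<le> g x" using assms(1) by (rule cINF_lower)
  moreover have "g x - v \<le> (INF z\<in>A. g z)" using assms by (intro cINF_greatest) auto
  ultimately show ?thesis by linarith
qed

lemma mult_ln_squared_le_4:
  fixes u :: real
  assumes "0 \<le> u" "u \<le> 1"
  shows "u * (ln u)^2 \<le> 4"
proof (cases "u = 0")
  case False
  define v where "v = sqrt u"
  have v: "0 < v" "v \<le> 1" "u = v^2" using assms False by (auto simp: v_def)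
  have "- ln v \<le> 1 / v"
    using ln_le_minus_one[of "1 / v"] v by (simp add: ln_div)
  moreover have "ln v \<le> 0" using v by simp
  ultimately have "(ln v)^2 \<le> (1 / v)^2"
    using power_mono[of "- ln v" "1 / v" 2] by simp
  then have "v^2 * (ln v)^2 \<le> v^2 * (1 / v)^2" by (simp add: mult_left_mono)
  moreover have "u * (ln u)^2 = 4 * (v^2 * (ln v)^2)"
    using v by (simp add: ln_mult power2_eq_square algebra_simps)
  ultimately show ?thesis using v by (simp add: power_divide)
qed simp

lemma mult_log2_squared_le:
  fixes u M :: real
  assumes "0 \<le> u" "u \<le> M"
  shows "u * (log 2 u)^2 \<le> (4 + M * (ln M)^2) / (ln 2)^2"
proof -
  have "u * (ln u)^2 \<le> 4 + M * (ln M)^2"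
  proof (cases "u \<le> 1")
    case True
    then show ?thesis
      using mult_ln_squared_le_4[OF assms(1) True] assms by (simp add: add_increasing2)
  next
    case False
    then have "(ln u)^2 \<le> (ln M)^2" using assms by (intro power_mono) auto
    then have "u * (ln u)^2 \<le> M * (ln M)^2" using assms by (intro mult_mono) auto
    then show ?thesis by simp
  qed
  then show ?thesis by (simp add: log_def power_divide divide_right_mono)
qed

lemma continuous_on_Icc_bounded_above:
  fixes f :: "real \<Rightarrow> real"
  assumes "continuous_on {a..b} f"
  obtains M where "0 < M" "\<forall>x\<in>{a..b}. f x \<le> M"
proof -
  have "bounded (f ` {a..b})"
    by (rule compact_imp_bounded[OF compact_continuous_image[OF assms compact_Icc]])
  then obtain M where "0 < M" "\<forall>x\<in>{a..b}. \<bar>f x\<bar> \<le> M"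
    by (auto simp: bounded_pos)
  then show ?thesis using that by (meson abs_le_D1)
qed

lemma tendsto_div_neg_log2_at_right_0:
  fixes g :: "real \<Rightarrow> real"
  assumes "(g \<longlongrightarrow> c) (at_right 0)" "0 < M"
  shows "((\<lambda>\<delta>. g \<delta> / (2 * - log 2 (\<delta> * M))) \<longlongrightarrow> 0) (at_right 0)"
proof -
  have "((\<lambda>\<delta>. 1 / (2 * - log 2 (\<delta> * M))) \<longlongrightarrow> 0) (at_right 0)"
    using \<open>0 < M\<close> by real_asymp
  from tendsto_mult[OF assms(1) this] show ?thesis by simp
qed

lemma uni_cell_sets: "uni_cell a b d i \<in> sets lborel"
  by (simp add: uni_cell_def)

lemma uni_cell_subset: "uni_cell a b d i \<subseteq> {a..b}"
  by (auto simp: uni_cell_def)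

lemma uni_cell_disjoint:
  assumes "0 < d" "x \<in> uni_cell a b d i" "x \<in> uni_cell a b d j"
  shows "i = j"
proof -
  have "real i * d < (real j + 1) * d" "real j * d < (real i + 1) * d"
    using assms(2,3) by (auto simp: uni_cell_def)
  then have "real i < real j + 1" "real j < real i + 1"
    using \<open>0 < d\<close> mult_less_cancel_right_pos by blast+
  then show ?thesis by linarith
qed

lemma atLeastLessThan_subset_UN_uni_cell:
  assumes "0 < d"
  shows "{a..<b} \<subseteq> (\<Union>i<num_cells a b d. uni_cell a b d i)"
proof
  fix x assume x: "x \<in> {a..<b}"
  define i where "i = nat \<lfloor>(x - a) / d\<rfloor>"
  have "0 \<le> (x - a) / d" using x assms by auto
  then have "real i = of_int \<lfloor>(x - a) / d\<rfloor>" by (simp add: i_def)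
  then have i: "real i \<le> (x - a) / d" "(x - a) / d < real i + 1" by linarith+
  have "(x - a) / d < (b - a) / d" using x assms by (simp add: divide_strict_right_mono)
  then have "i < num_cells a b d" using i by (simp add: i_def num_cells_def) linarith
  moreover have "x \<in> uni_cell a b d i"
    using i x assms by (auto simp: uni_cell_def field_simps)
  ultimately show "x \<in> (\<Union>i<num_cells a b d. uni_cell a b d i)" by blast
qed

lemma sum_cell_prob:
  assumes "0 < d" and f: "set_integrable lborel {a..b} f"
  shows "(\<Sum>i<num_cells a b d. cell_prob f a b d i) = (LINT x : {a..b} | lborel. f x)"
proof -
  let ?U = "\<Union>i<num_cells a b d. uni_cell a b d i"
  have U: "?U \<subseteq> {a..b}" "?U \<in> sets lborel"
    using uni_cell_subset[of a b d] uni_cell_sets by auto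
  have "(\<Sum>i<num_cells a b d. cell_prob f a b d i) = (LINT x : ?U | lborel. f x)"
    unfolding cell_prob_def
  proof (rule set_integral_finite_UN_AE[symmetric])
    show "AE x in lborel. x \<in> uni_cell a b d i \<and> x \<in> uni_cell a b d j \<longrightarrow> i = j" for i j
      using uni_cell_disjoint[OF \<open>0 < d\<close>] by (intro AE_I2) blast
    show "set_integrable lborel (uni_cell a b d i) f" for i
      by (rule set_integrable_subset[OF f uni_cell_sets uni_cell_subset])
  qed (use uni_cell_sets in auto)
  also have "\<dots> = (LINT x : {a..b} | lborel. f x)"
  proof (rule set_integral_cong_set)
    show "set_borel_measurable lborel {a..b} f" "set_borel_measurable lborel ?U f"
      using f set_integrable_subset[OF f U(2,1)]
      unfolding set_borel_measurable_def set_integrable_def by auto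
    show "AE x in lborel. (x \<in> {a..b}) = (x \<in> ?U)"
      using AE_lborel_singleton[of b]
    proof eventually_elim
      case (elim x)
      then have "x \<in> {a..b} \<Longrightarrow> x \<in> {a..<b}" by auto
      then show ?case using atLeastLessThan_subset_UN_uni_cell[OF \<open>0 < d\<close>, of a b] U(1) by blast
    qed
  qed
  finally show ?thesis .
qed

lemma cell_prob_nonneg: "(\<And>x. 0 \<le> f x) \<Longrightarrow> 0 \<le> cell_prob f a b d i"
  unfolding cell_prob_def set_lebesgue_integral_def
  by (intro Bochner_Integration.integral_nonneg_AE AE_I2) (simp add: indicator_def)

lemma atLeastAtMost_fmeasurable: "{a..b::real} \<in> fmeasurable lborel"
  using emeasure_lborel_cbox_finite[of a b] by (simp add: fmeasurable_def)

lemma uni_cell_fmeasurable: "uni_cell a b d i \<in> fmeasurable lborel"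
  by (rule fmeasurableI2[OF atLeastAtMost_fmeasurable uni_cell_subset uni_cell_sets])

lemma measure_uni_cell_le:
  assumes "0 \<le> d"
  shows "measure lborel (uni_cell a b d i) \<le> d"
proof -
  let ?I = "{a + real i * d .. a + (real i + 1) * d}"
  have "measure lborel (uni_cell a b d i) \<le> measure lborel ?I"
    by (rule measure_mono_fmeasurable[OF _ uni_cell_sets atLeastAtMost_fmeasurable])
      (auto simp: uni_cell_def)
  also have "\<dots> = d" using assms by (simp add: algebra_simps)
  finally show ?thesis .
qed

lemma cell_prob_le:
  assumes "0 \<le> d" "0 \<le> M" "\<forall>x\<in>{a..b}. f x \<le> M"
  shows "cell_prob f a b d i \<le> d * M"
proof -
  let ?C = "uni_cell a b d i"
  have "cell_prob f a b d i \<le> (\<integral>x. M * indicator ?C x \<partial>lborel)"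
    unfolding cell_prob_def set_lebesgue_integral_def
  proof (rule integral_mono')
    show "integrable lborel (\<lambda>x. M * indicator ?C x)"
      using uni_cell_fmeasurable by (auto simp: fmeasurable_def)
    show "indicator ?C x *\<^sub>R f x \<le> M * indicator ?C x" for x
      using assms(3) uni_cell_subset[of a b d i] by (auto simp: indicator_def)
  qed (simp add: assms(2))
  also have "\<dots> = M * measure lborel ?C"
    using uni_cell_fmeasurable by (simp add: fmeasurable_def)
  also have "\<dots> \<le> d * M"
    using measure_uni_cell_le[OF assms(1)] assms(2) by (simp add: mult.commute mult_left_mono)
  finally show ?thesis .
qed

lemma num_cells_mult_le:
  assumes "0 < d" "a \<le> b"
  shows "real (num_cells a b d) * d \<le> b - a + d"
proof -
  have "real (num_cells a b d) \<le> (b - a) / d + 1"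
    using assms by (simp add: num_cells_def)
  then have "real (num_cells a b d) * d \<le> ((b - a) / d + 1) * d"
    by (rule mult_right_mono) (use assms in simp)
  also have "\<dots> = b - a + d"
    using assms by (simp add: distrib_right)
  finally show ?thesis .
qed

text \<open>Since log 2 0 = 0, a cell of probability 0 gets a codeword of length 0.\<close>

lemma ceiling_neg_log2_nonneg:
  fixes p :: real
  assumes "0 \<le> p" "p \<le> 1"
  shows "0 \<le> real_of_int \<lceil>- log 2 p\<rceil>"
proof (cases "p = 0")
  case False
  then have "log 2 p \<le> 0" using assms by simp
  then show ?thesis by linarith
qed (simp add: log_def)

lemma ceiling_neg_log2_ge:
  fixes p q :: real
  assumes "0 < p" "p \<le> q"
  shows "- log 2 q \<le> real_of_int \<lceil>- log 2 p\<rceil>"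
proof -
  have "log 2 p \<le> log 2 q" using assms by simp
  then show ?thesis by linarith
qed

lemma ceiling_neg_log2_sq_dev_le:
  fixes p d M K :: real
  assumes "0 \<le> p" "p \<le> d * M" "0 < d" and K: "\<forall>u\<in>{0..M}. u * (log 2 u)^2 \<le> K"
  shows "p * (real_of_int \<lceil>- log 2 p\<rceil> + log 2 d)^2 \<le> 2 * d * K + 2 * p"
proof (cases "p = 0")
  case True
  have "0 \<le> d * M" using assms by linarith
  then have "0 \<le> M" using \<open>0 < d\<close> by (simp add: zero_le_mult_iff)
  then have "0 \<le> K" using bspec[OF K, of 0] by simp
  then show ?thesis using True \<open>0 < d\<close> by simp
next
  case False
  define u where "u = p / d"
  define e where "e = real_of_int \<lceil>- log 2 p\<rceil> - (- log 2 p)"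
  have u: "0 < u" "u \<le> M" using assms False by (auto simp: u_def pos_divide_le_eq mult.commute)
  have e: "0 \<le> e" "e < 1" unfolding e_def by linarith+
  have "real_of_int \<lceil>- log 2 p\<rceil> + log 2 d = - log 2 u + e"
    using assms False by (simp add: u_def e_def log_divide)
  moreover have "(- log 2 u + e)^2 \<le> 2 * (log 2 u)^2 + 2"
  proof -
    have "2 * (log 2 u)^2 + 2 * e^2 - (- log 2 u + e)^2 = (log 2 u + e)^2"
      by (simp add: power2_eq_square algebra_simps)
    moreover have "e^2 \<le> 1" using e by (simp add: power_le_one)
    ultimately show ?thesis using zero_le_power2[of "log 2 u + e"] by linarith
  qed
  ultimately have "p * (real_of_int \<lceil>- log 2 p\<rceil> + log 2 d)^2 \<le> p * (2 * (log 2 u)^2 + 2)"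
    using assms by (simp add: mult_left_mono)
  also have "\<dots> = 2 * d * (u * (log 2 u)^2) + 2 * p"
    using \<open>0 < d\<close> by (simp add: u_def algebra_simps)
  also have "\<dots> \<le> 2 * d * K + 2 * p"
    using K u \<open>0 < d\<close> by simp
  finally show ?thesis .
qed

lemma mean_shannon_len_ge:
  assumes "(\<Sum>i<num_cells a b d. cell_prob f a b d i) = 1" "\<forall>i. 0 \<le> cell_prob f a b d i"
    and "\<forall>i. cell_prob f a b d i \<le> q"
  shows "- log 2 q \<le> exp_L f a b d (\<lambda>l. l)"
proof -
  have "cell_prob f a b d i * - log 2 q \<le> cell_prob f a b d i * shannon_len f a b d i" for i
  proof (cases "cell_prob f a b d i = 0")
    case False
    then have "0 < cell_prob f a b d i" using assms(2) by (simp add: order_less_le)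
    then have "- log 2 q \<le> shannon_len f a b d i"
      using assms(3) ceiling_neg_log2_ge unfolding shannon_len_def by blast
    then show ?thesis by (rule mult_left_mono) (use assms(2) in auto)
  qed simp
  then have "(\<Sum>i<num_cells a b d. cell_prob f a b d i * - log 2 q) \<le> exp_L f a b d (\<lambda>l. l)"
    unfolding exp_L_def by (intro sum_mono) auto
  then show ?thesis using assms(1) by (simp add: sum_negf sum_distrib_right[symmetric])
qed

lemma variance_shannon_len_le:
  assumes "(\<Sum>i<num_cells a b d. cell_prob f a b d i) = 1" "\<forall>i. 0 \<le> cell_prob f a b d i"
    and "\<forall>i. cell_prob f a b d i \<le> d * M" "\<forall>u\<in>{0..M}. u * (log 2 u)^2 \<le> K"
    and "0 < d" "0 \<le> M" "a \<le> b"
  shows "exp_L f a b d (\<lambda>l. l^2) - (exp_L f a b d (\<lambda>l. l))^2 \<le> 2 * K * (b - a + d) + 2"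
proof -
  let ?p = "cell_prob f a b d" and ?L = "shannon_len f a b d" and ?N = "num_cells a b d"
  have "0 \<le> K" using bspec[OF assms(4), of 0] assms(6) by simp
  have "exp_L f a b d (\<lambda>l. l^2) - (exp_L f a b d (\<lambda>l. l))^2
      \<le> (\<Sum>i<?N. ?p i * (?L i - - log 2 d)^2)"
    unfolding exp_L_def by (rule weighted_variance_le_sq_dev[OF assms(1)])
  also have "\<dots> \<le> (\<Sum>i<?N. 2 * d * K + 2 * ?p i)"
  proof (rule sum_mono)
    show "?p i * (?L i - - log 2 d)^2 \<le> 2 * d * K + 2 * ?p i" for i
      using ceiling_neg_log2_sq_dev_le[of "?p i" d M K] assms(2-5) by (simp add: shannon_len_def)
  qed
  also have "\<dots> = 2 * K * (real ?N * d) + 2"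
    using assms(1) by (simp add: sum.distrib sum_distrib_left[symmetric] algebra_simps)
  also have "\<dots> \<le> 2 * K * (b - a + d) + 2"
    using num_cells_mult_le[OF assms(5,7)] \<open>0 \<le> K\<close> by (simp add: mult_left_mono)
  finally show ?thesis .
qed

lemma AoI_ge_three_halves_mean_len:
  assumes "(\<Sum>i<num_cells a b d. cell_prob f a b d i) = 1" "\<forall>i. 0 \<le> cell_prob f a b d i"
    and "\<forall>t\<ge>0. 0 \<le> z t" "\<forall>i. 0 \<le> shannon_len f a b d i" "0 < exp_L f a b d (\<lambda>l. l)"
  shows "3 / 2 * exp_L f a b d (\<lambda>l. l) \<le> AoI f a b d z"
proof -
  have "exp_L f a b d (\<lambda>l. l) / 2
      \<le> exp_L f a b d (\<lambda>l. (l + z l)^2) / (2 * exp_L f a b d (\<lambda>l. l + z l))"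
    unfolding exp_L_def
    by (rule half_weighted_mean_le[of "cell_prob f a b d" _ "shannon_len f a b d"
          "\<lambda>i. shannon_len f a b d i + z (shannon_len f a b d i)"])
      (use assms in \<open>auto simp: exp_L_def\<close>)
  then show ?thesis unfolding AoI_def by simp
qed

lemma zero_wait_AoI_gap_le:
  fixes f :: "real \<Rightarrow> real"
  assumes f_nonneg: "\<forall>x. 0 \<le> f x" and f_int: "set_integrable lborel {a..b} f"
    and f_one: "(LINT x : {a..b} | lborel. f x) = 1" and f_le: "\<forall>x\<in>{a..b}. f x \<le> M"
    and K: "\<forall>u\<in>{0..M}. u * (log 2 u)^2 \<le> K"
    and "a \<le> b" "0 < d" "0 < M" "d * M < 1" "0 \<le> W"
  shows "0 \<le> AoI f a b d (\<lambda>_. 0) - (INF z\<in>policies W. AoI f a b d z) \<and>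
    AoI f a b d (\<lambda>_. 0) - (INF z\<in>policies W. AoI f a b d z)
      \<le> (2 * K * (b - a + d) + 2) / (2 * - log 2 (d * M))"
proof -
  let ?p = "cell_prob f a b d"
  define E1 where "E1 = exp_L f a b d (\<lambda>l. l)"
  define V where "V = exp_L f a b d (\<lambda>l. l^2) - E1^2"
  define T where "T = - log 2 (d * M)"
  have sum_p: "(\<Sum>i<num_cells a b d. ?p i) = 1"
    using sum_cell_prob[OF \<open>0 < d\<close> f_int] f_one by simp
  have p_nonneg: "\<forall>i. 0 \<le> ?p i" using cell_prob_nonneg f_nonneg by blast
  have p_le: "\<forall>i. ?p i \<le> d * M" using cell_prob_le f_le \<open>0 < d\<close> \<open>0 < M\<close> by simp
  have len_nonneg: "\<forall>i. 0 \<le> shannon_len f a b d i"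
    unfolding shannon_len_def using p_nonneg p_le \<open>d * M < 1\<close> ceiling_neg_log2_nonneg
    by (meson less_imp_le order_trans)
  have "0 < T" using \<open>0 < d\<close> \<open>0 < M\<close> \<open>d * M < 1\<close> by (simp add: T_def)
  moreover have "T \<le> E1"
    unfolding T_def E1_def by (rule mean_shannon_len_ge[OF sum_p p_nonneg p_le])
  ultimately have "0 < E1" by linarith
  have "V \<le> 2 * K * (b - a + d) + 2"
    unfolding V_def E1_def
    by (rule variance_shannon_len_le[OF sum_p p_nonneg p_le K \<open>0 < d\<close>]) (use assms in auto)
  moreover have "0 \<le> 2 * K * (b - a + d) + 2"
    using bspec[OF K, of 0] \<open>0 < M\<close> \<open>a \<le> b\<close> \<open>0 < d\<close> by simp
  ultimately have V_div: "V / (2 * E1) \<le> (2 * K * (b - a + d) + 2) / (2 * T)"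
    using \<open>0 < T\<close> \<open>T \<le> E1\<close> by (intro frac_le) auto
  have "AoI f a b d (\<lambda>_. 0) = V / (2 * E1) + 3 / 2 * E1"
    using \<open>0 < E1\<close> by (simp add: AoI_def V_def E1_def field_simps power2_eq_square)
  then have "\<forall>z\<in>policies W. AoI f a b d (\<lambda>_. 0) - V / (2 * E1) \<le> AoI f a b d z"
    using AoI_ge_three_halves_mean_len[OF sum_p p_nonneg _ len_nonneg] \<open>0 < E1\<close>
    by (auto simp: policies_def E1_def)
  moreover have "(\<lambda>_. 0) \<in> policies W" using \<open>0 \<le> W\<close> by (simp add: policies_def)
  ultimately show ?thesis
    using diff_cINF_bounds[of "\<lambda>_. 0" "policies W" "AoI f a b d"] V_div T_def by fastforce
qed

theorem corollary1:
  fixes f :: "real \<Rightarrow> real" and a b W :: real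
  assumes "a < b"
    and "\<forall>x. 0 \<le> f x"
    and "closure {x. f x > 0} = {a..b}"
    and "continuous_on {a..b} f"
    and "f differentiable_on {a..b}"
    and "set_integrable lborel {a..b} f"
    and "(LINT x : {a..b} | lborel. f x) = 1"
    and "set_integrable lborel {a..b} (\<lambda>x. f x * (log 2 (f x))\<^sup>2)"
    and "set_integrable lborel {a..b} (\<lambda>x. f x * log 2 (f x))"
    and "0 \<le> W"
  shows "((\<lambda>\<delta>. AoI f a b \<delta> (\<lambda>_. 0) - (INF z \<in> policies W. AoI f a b \<delta> z))
           \<longlongrightarrow> 0) (at_right 0)"
proof -
  obtain M where "0 < M" and f_le: "\<forall>x\<in>{a..b}. f x \<le> M"
    using continuous_on_Icc_bounded_above[OF assms(4)] .
  define K where "K = (4 + M * (ln M)^2) / (ln 2)^2"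
  have K: "\<forall>u\<in>{0..M}. u * (log 2 u)^2 \<le> K"
    unfolding K_def using mult_log2_squared_le by auto
  let ?gap = "\<lambda>\<delta>. AoI f a b \<delta> (\<lambda>_. 0) - (INF z \<in> policies W. AoI f a b \<delta> z)"
  let ?bound = "\<lambda>\<delta>. (2 * K * (b - a + \<delta>) + 2) / (2 * - log 2 (\<delta> * M))"
  have "0 \<le> ?gap \<delta> \<and> ?gap \<delta> \<le> ?bound \<delta>" if "0 < \<delta>" "\<delta> < 1 / M" for \<delta>
  proof (rule zero_wait_AoI_gap_le[OF assms(2,6,7) f_le K])
    show "\<delta> * M < 1" using that \<open>0 < M\<close> by (simp add: pos_less_divide_eq)
  qed (use that \<open>a < b\<close> \<open>0 < M\<close> \<open>0 \<le> W\<close> in auto)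
  then have "\<forall>\<^sub>F \<delta> in at_right 0. 0 \<le> ?gap \<delta> \<and> ?gap \<delta> \<le> ?bound \<delta>"
    unfolding eventually_at_right_field using \<open>0 < M\<close> by (intro exI[of _ "1 / M"]) auto
  then have gap_bounds:
      "(\<forall>\<^sub>F \<delta> in at_right 0. 0 \<le> ?gap \<delta>) \<and> (\<forall>\<^sub>F \<delta> in at_right 0. ?gap \<delta> \<le> ?bound \<delta>)"
    unfolding eventually_conj_iff .
  have "((\<lambda>\<delta>. 2 * K * (b - a + \<delta>) + 2) \<longlongrightarrow> 2 * K * (b - a + 0) + 2) (at_right 0)"
    by (intro tendsto_intros)
  then have "(?bound \<longlongrightarrow> 0) (at_right 0)"
    using \<open>0 < M\<close> by (rule tendsto_div_neg_log2_at_right_0)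
  then show ?thesis
    using tendsto_sandwich[OF conjunct1[OF gap_bounds] conjunct2[OF gap_bounds] tendsto_const] by blast
qed

end
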